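(* For $\beta,\gamma\in\mathbb{C}\setminus\{0,-1,-2\}$, the modules $\mathbb{M}_\beta$ and $\mathbb{M}_\gamma$ are isomorphic $B_{5,10}$-modules if and only if $(1+\beta)^2=(1+\gamma)^2$, i.e. if and only if $\beta=\gamma$ or $\beta+\gamma=-2$.
   Context: Let $Z=\mathbb{C}[[t]]$. Let $\Gamma_{10}$ be the quiver with vertices $0,1,\dots,9$ (indices taken mod $10$) on a cycle and arrows $x_i\colon i-1\to i$, $y_i\colon i\to i-1$ for $i=1,\dots,10$. Let $B_{5,10}$ be the completed path algebra of $\Gamma_{10}$ modulo the closed ideal generated by $xy=yx$ and $x^5=y^5$ at every vertex. For $b=(b_1,\dots,b_{10})\in Z^{10}$ with $\sum_i b_i=0$, the $B_{5,10}$-module $\mathbb{M}(b)$ has $V_i=Z\oplus Z$ at every vertex, and for odd $j$: $x_j=\begin{pmatrix} t& b_j\\ 0&1\end{pmatrix}$, $y_j=\begin{pmatrix} 1&-b_j\\0&t\end{pmatrix}$; for even $j$: $x_j=\begin{pmatrix}1&b_j\\0&t\end{pmatrix}$, $y_j=\begin{pmatrix}t&-b_j\\0&1\end{pmatrix}$. An isomorphism $\mathbb{M}(b)\to\mathbb{M}(c)$ is a family of invertible $Z$-linear maps $\varphi_i\colon Z^2\to Z^2$ commuting with all $x_i$ and $y_i$. For odd $i$ write $B_i=b_i+b_{i+1}$ (indices mod $10$). For $\beta\in\mathbb{C}\setminus\{0,-1,-2\}$, $\mathbb{M}_\beta$ denotes $\mathbb{M}(b)$ for a tuple $b$ with $B_1=\beta$,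 $B_3=1$, $B_5=-1$, $B_7=-\beta-1$, $B_9=1$ (e.g. $b_i=B_i$ for odd $i$ and $b_i=0$ for even $i$). *)

theory Defs
  imports "HOL-Analysis.Analysis" "HOL-Computational_Algebra.Formal_Power_Series"
begin

text \<open>Z = C[[t]] is the type complex fps, t = fps_X. Z-linear maps Z^2 -> Z^2 are
  2x2 matrices over Z acting on column vectors.\<close>

definition mat2 :: "'a::zero \<Rightarrow> 'a \<Rightarrow> 'a \<Rightarrow> 'a \<Rightarrow> 'a^2^2" where
  "mat2 a b c d = (\<chi> i j. if i = 1 then (if j = 1 then a else b) else (if j = 1 then c else d))"

text \<open>The arrow x_j : V_(j-1) -> V_j of M(b), j = 1..10 (vertex 10 = vertex 0).\<close>
definition xmat :: "(nat \<Rightarrow> complex fps) \<Rightarrow> nat \<Rightarrow> complex fps^2^2" where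
  "xmat b j = (if odd j then mat2 fps_X (b j) 0 1 else mat2 1 (b j) 0 fps_X)"

text \<open>The arrow y_j : V_j -> V_(j-1) of M(b).\<close>
definition ymat :: "(nat \<Rightarrow> complex fps) \<Rightarrow> nat \<Rightarrow> complex fps^2^2" where
  "ymat b j = (if odd j then mat2 1 (- b j) 0 fps_X else mat2 fps_X (- b j) 0 1)"

definition M_iso :: "(nat \<Rightarrow> complex fps) \<Rightarrow> (nat \<Rightarrow> complex fps) \<Rightarrow> bool" where
  "M_iso b c \<longleftrightarrow> (\<exists>\<phi> :: nat \<Rightarrow> complex fps^2^2.
     (\<forall>i<10. invertible (\<phi> i)) \<and>
     (\<forall>j\<in>{1..10}. \<phi> (j mod 10) ** xmat b j = xmat c j ** \<phi> (j - 1) \<and>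
                  \<phi> (j - 1) ** ymat b j = ymat c j ** \<phi> (j mod 10)))"

definition M_beta_tuple :: "(nat \<Rightarrow> complex fps) \<Rightarrow> complex \<Rightarrow> bool" where
  "M_beta_tuple b \<beta> \<longleftrightarrow> (\<Sum>i=1..10. b i) = 0 \<and>
     b 1 + b 2 = fps_const \<beta> \<and> b 3 + b 4 = 1 \<and> b 5 + b 6 = -1 \<and>
     b 7 + b 8 = fps_const (- \<beta> - 1) \<and> b 9 + b 10 = 1"

end

theory Submission
  imports Defs
begin

text \<open>An isomorphism between M(b) and M(c) is governed modulo t by a few scalars: the diagonal
  constant terms a_k, d_k of its matrix at the even vertex 2k, and the constant term e of the
  lower-left entry at the odd vertices, which is the same for all k. The intertwining relations of
  the arrows 2k+1, 2k+2 translate into a_(k+1) = a_k + C_k e, d_(k+1) = d_k - B_k e and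
  C_k d_k - B_k a_k = e B_k C_k, where B_k, C_k are the block sums of b and c; conversely every
  solution with all a_k d_k nonzero lifts to an isomorphism given by explicit matrices.
  For the blocks (\<beta>, 1, -1, -\<beta>-1, 1) the relations at k = 1 and k = 4 force
  (\<beta> + \<gamma> + 2) e = 0, and e = 0 forces \<beta> = \<gamma>; in both remaining cases an
  explicit solution exists.\<close>

lemma mat2_nth [simp]:
  "mat2 a b c d $ 1 $ 1 = a" "mat2 a b c d $ 1 $ 2 = b"
  "mat2 a b c d $ 2 $ 1 = c" "mat2 a b c d $ 2 $ 2 = d"
  by (simp_all add: mat2_def)

lemma mat2_eq_iff:
  "mat2 a b c d = mat2 a' b' c' d' \<longleftrightarrow> a = a' \<and> b = b' \<and> c = c' \<and> d = d'"
  by (auto simp: vec_eq_iff forall_2 mat2_def)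

lemma mat2_cases:
  fixes A :: "'a::zero^2^2"
  obtains p q r s where "A = mat2 p q r s"
proof
  show "A = mat2 (A$1$1) (A$1$2) (A$2$1) (A$2$2)"
    by (auto simp: vec_eq_iff forall_2 mat2_def)
qed

lemma mat2_mult:
  "mat2 a b c d ** mat2 a' b' c' d' =
   mat2 (a*a' + b*c') (a*b' + b*d') (c*a' + d*c') (c*b' + d*d')"
  by (auto simp: vec_eq_iff forall_2 matrix_matrix_mult_def sum_2 mat2_def)

lemma mat2_one: "mat 1 = mat2 1 0 0 (1::'a::{zero,one})"
  by (auto simp: vec_eq_iff forall_2 mat_def mat2_def)

lemma invertible_mat2:
  fixes p q r s :: "'a::field fps"
  assumes "p * s - q * r = fps_const u" "u \<noteq> 0"
  shows "invertible (mat2 p q r s)"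
proof -
  define k where "k = fps_const (1/u)"
  have "k * fps_const u = 1" using assms(2) by (simp add: k_def)
  then have "mat2 p q r s ** mat2 (s * k) (-q * k) (-r * k) (p * k) = mat 1"
    "mat2 (s * k) (-q * k) (-r * k) (p * k) ** mat2 p q r s = mat 1"
    using assms(1) by (simp_all add: mat2_mult mat2_one mat2_eq_iff algebra_simps)
  then show ?thesis unfolding invertible_def by blast
qed

lemma invertible_imp_diagonal_nth_0_nonzero:
  fixes A :: "'a::field fps^2^2"
  assumes "invertible A" "fps_nth (A$2$1) 0 = 0"
  shows "fps_nth (A$1$1) 0 * fps_nth (A$2$2) 0 \<noteq> 0"
proof -
  obtain A' where "A ** A' = mat 1" using assms(1) unfolding invertible_def by blast
  then have "det A * det A' = 1" by (metis det_mul det_I)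
  then have "fps_nth (det A) 0 \<noteq> 0"
    by (metis fps_mult_nth_0 fps_one_nth zero_neq_one mult_zero_left)
  then show ?thesis using assms(2) by (simp add: det_2)
qed

lemma block_constant_terms:
  fixes \<Phi>0 \<Phi>1 \<Phi>2 :: "'a::comm_ring_1 fps^2^2"
  assumes odd: "\<Phi>1 ** mat2 fps_X b 0 1 = mat2 fps_X c 0 1 ** \<Phi>0"
    and even: "\<Phi>2 ** mat2 1 b' 0 fps_X = mat2 1 c' 0 fps_X ** \<Phi>1"
    and B: "b + b' = fps_const B" and C: "c + c' = fps_const C"
  defines "e \<equiv> fps_nth (\<Phi>1$2$1) 0"
  shows "fps_nth (\<Phi>0$2$1) 0 = 0" "fps_nth (\<Phi>0$2$1) 1 = e" "fps_nth (\<Phi>2$2$1) 1 = e"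
    and "fps_nth (\<Phi>2$1$1) 0 = fps_nth (\<Phi>0$1$1) 0 + C * e"
    and "fps_nth (\<Phi>2$2$2) 0 = fps_nth (\<Phi>0$2$2) 0 - B * e"
    and "C * fps_nth (\<Phi>0$2$2) 0 - B * fps_nth (\<Phi>0$1$1) 0 = e * B * C"
proof -
  obtain p q r s where \<Phi>0: "\<Phi>0 = mat2 p q r s" by (rule mat2_cases)
  obtain P Q R S where \<Phi>1: "\<Phi>1 = mat2 P Q R S" by (rule mat2_cases)
  obtain p' q' r' s' where \<Phi>2: "\<Phi>2 = mat2 p' q' r' s'" by (rule mat2_cases)
  have "mat2 (P * fps_X) (P * b + Q) (R * fps_X) (R * b + S) =
        mat2 (fps_X * p + c * r) (fps_X * q + c * s) r s"
    using odd by (simp add: \<Phi>0 \<Phi>1 mat2_mult)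
  then have o1: "P * fps_X = fps_X * p + c * r" and o2: "P * b + Q = fps_X * q + c * s"
    and o3: "R * fps_X = r" and o4: "R * b + S = s"
    unfolding mat2_eq_iff by blast+
  have "mat2 p' (p' * b' + q' * fps_X) r' (r' * b' + s' * fps_X) =
        mat2 (P + c' * R) (Q + c' * S) (fps_X * R) (fps_X * S)"
    using even by (simp add: \<Phi>1 \<Phi>2 mat2_mult)
  then have e1: "p' = P + c' * R" and e2: "p' * b' + q' * fps_X = Q + c' * S"
    and e3: "r' = fps_X * R" and e4: "r' * b' + s' * fps_X = fps_X * S"
    unfolding mat2_eq_iff by blast+
  let ?n0 = "\<lambda>f. fps_nth f 0" and ?n1 = "\<lambda>f. fps_nth f 1"
  have B0: "?n0 b + ?n0 b' = B" and C0: "?n0 c + ?n0 c' = C"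
    using arg_cong[OF B, of ?n0] arg_cong[OF C, of ?n0] by simp_all
  have e: "e = ?n0 R" by (simp add: e_def \<Phi>1)
  have r0: "?n0 r = 0" and r1: "?n1 r = ?n0 R" and r'1: "?n1 r' = ?n0 R"
    using o3 e3 by auto
  have P0: "?n0 P = ?n0 p + ?n0 c * ?n0 R"
    using arg_cong[OF o1, of ?n1] r0 r1 by (simp add: fps_mult_nth_1)
  have S0: "?n0 S = ?n0 s - ?n0 R * ?n0 b"
    using arg_cong[OF o4, of ?n0] by (simp add: algebra_simps)
  have Q0: "?n0 Q = ?n0 c * ?n0 s - ?n0 P * ?n0 b"
    using arg_cong[OF o2, of ?n0] by (simp add: algebra_simps)
  have p'0: "?n0 p' = ?n0 P + ?n0 c' * ?n0 R"
    using e1 by simp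
  have E2: "?n0 p' * ?n0 b' = ?n0 Q + ?n0 c' * ?n0 S"
    using arg_cong[OF e2, of ?n0] by simp
  have E4: "?n0 R * ?n0 b' + ?n0 s' = ?n0 S"
    using arg_cong[OF e4, of ?n1] e3 by (simp add: fps_mult_nth_1 mult.commute)
  show "fps_nth (\<Phi>0$2$1) 0 = 0" "fps_nth (\<Phi>0$2$1) 1 = e" "fps_nth (\<Phi>2$2$1) 1 = e"
    using r0 r1 r'1 by (simp_all add: \<Phi>0 \<Phi>2 e)
  show "fps_nth (\<Phi>2$1$1) 0 = fps_nth (\<Phi>0$1$1) 0 + C * e"
    using p'0 P0 C0[symmetric] by (simp add: \<Phi>0 \<Phi>2 e algebra_simps)
  show "fps_nth (\<Phi>2$2$2) 0 = fps_nth (\<Phi>0$2$2) 0 - B * e"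
    using E4 S0 B0[symmetric] by (simp add: \<Phi>0 \<Phi>2 e algebra_simps)
  show "C * fps_nth (\<Phi>0$2$2) 0 - B * fps_nth (\<Phi>0$1$1) 0 = e * B * C"
    using E2 p'0 P0 Q0 S0 B0[symmetric] C0[symmetric] by (simp add: \<Phi>0 e algebra_simps)
qed

definition even_map :: "'a::comm_ring_1 \<Rightarrow> 'a \<Rightarrow> 'a \<Rightarrow> 'a fps^2^2" where
  "even_map \<alpha> \<delta> e = mat2 (fps_const \<alpha>) 0 (fps_X * fps_const e) (fps_const \<delta>)"

text \<open>odd_map is x_c * even_map * x_b^(-1) computed over Laurent series; it has no
  denominators because the lower-left entry of even_map is divisible by t.\<close>

definition odd_map :: "'a::comm_ring_1 \<Rightarrow> 'a \<Rightarrow> 'a \<Rightarrow> 'a fps \<Rightarrow> 'a fps \<Rightarrow> 'a fps^2^2" where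
  "odd_map \<alpha> \<delta> e b c = mat2 (fps_const \<alpha> + c * fps_const e)
     (- (fps_const \<alpha> + c * fps_const e) * b + c * fps_const \<delta>)
     (fps_const e) (fps_const \<delta> - fps_const e * b)"

lemma invertible_even_map: "\<alpha> * \<delta> \<noteq> 0 \<Longrightarrow> invertible (even_map \<alpha> \<delta> (e::'a::field))"
  unfolding even_map_def by (rule invertible_mat2[where u = "\<alpha> * \<delta>"]) auto

lemma invertible_odd_map: "\<alpha> * \<delta> \<noteq> 0 \<Longrightarrow> invertible (odd_map \<alpha> \<delta> (e::'a::field) b c)"
  unfolding odd_map_def
  by (rule invertible_mat2[where u = "\<alpha> * \<delta>"])
     (simp_all add: algebra_simps flip: fps_const_mult fps_const_neg fps_const_sub)

lemma block_intertwined_by_maps: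
  fixes b b' c c' :: "'a::comm_ring_1 fps"
  assumes B: "b + b' = fps_const B" and C: "c + c' = fps_const C"
    and cond: "C * \<delta> - B * \<alpha> = e * B * C"
  shows "odd_map \<alpha> \<delta> e b c ** mat2 fps_X b 0 1 = mat2 fps_X c 0 1 ** even_map \<alpha> \<delta> e"
    and "even_map \<alpha> \<delta> e ** mat2 1 (-b) 0 fps_X = mat2 1 (-c) 0 fps_X ** odd_map \<alpha> \<delta> e b c"
    and "even_map (\<alpha> + C * e) (\<delta> - B * e) e ** mat2 1 b' 0 fps_X =
      mat2 1 c' 0 fps_X ** odd_map \<alpha> \<delta> e b c"
    and "odd_map \<alpha> \<delta> e b c ** mat2 fps_X (-b') 0 1 =
      mat2 fps_X (-c') 0 1 ** even_map (\<alpha> + C * e) (\<delta> - B * e) e"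
proof -
  have b': "b' = fps_const B - b" and c': "c' = fps_const C - c"
    using B C by (simp_all add: algebra_simps flip: B C)
  have K: "fps_const C * fps_const \<delta> =
      fps_const B * fps_const \<alpha> + fps_const e * fps_const B * fps_const C"
    using cond
    by (simp add: algebra_simps flip: fps_const_mult fps_const_add fps_const_neg fps_const_sub)
  show "odd_map \<alpha> \<delta> e b c ** mat2 fps_X b 0 1 = mat2 fps_X c 0 1 ** even_map \<alpha> \<delta> e"
    "even_map \<alpha> \<delta> e ** mat2 1 (-b) 0 fps_X = mat2 1 (-c) 0 fps_X ** odd_map \<alpha> \<delta> e b c"
    unfolding odd_map_def even_map_def mat2_mult mat2_eq_iff
    by (simp_all add: algebra_simps flip: fps_const_neg fps_const_sub)
  show "even_map (\<alpha> + C * e) (\<delta> - B * e) e ** mat2 1 b' 0 fps_X =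
      mat2 1 c' 0 fps_X ** odd_map \<alpha> \<delta> e b c"
    "odd_map \<alpha> \<delta> e b c ** mat2 fps_X (-b') 0 1 =
      mat2 fps_X (-c') 0 1 ** even_map (\<alpha> + C * e) (\<delta> - B * e) e"
    unfolding odd_map_def even_map_def mat2_mult mat2_eq_iff b' c' using K
    by (simp_all add: algebra_simps flip: fps_const_mult fps_const_add fps_const_neg fps_const_sub)
qed

definition intertwines ::
    "(nat \<Rightarrow> complex fps^2^2) \<Rightarrow> (nat \<Rightarrow> complex fps) \<Rightarrow> (nat \<Rightarrow> complex fps) \<Rightarrow> nat \<Rightarrow> bool" where
  "intertwines \<phi> b c j \<longleftrightarrow>
     \<phi> (j mod 10) ** xmat b j = xmat c j ** \<phi> (j - 1) \<and>
     \<phi> (j - 1) ** ymat b j = ymat c j ** \<phi> (j mod 10)"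

lemma ball_atLeastAtMost_double:
  "(\<forall>j\<in>{1..2*n::nat}. P j) \<longleftrightarrow> (\<forall>k<n. P (2*k+1) \<and> P (2*k+2))"
proof
  assume "\<forall>k<n. P (2*k+1) \<and> P (2*k+2)"
  moreover have "\<exists>k<n. j = 2*k+1 \<or> j = 2*k+2" if "j \<in> {1..2*n}" for j
    using that by (intro exI[of _ "(j - 1) div 2"]) auto
  ultimately show "\<forall>j\<in>{1..2*n}. P j" by blast
qed auto

lemma M_iso_iff_blocks:
  "M_iso b c \<longleftrightarrow> (\<exists>\<phi>. (\<forall>i<10. invertible (\<phi> i)) \<and>
     (\<forall>k<5. intertwines \<phi> b c (2*k+1) \<and> intertwines \<phi> b c (2*k+2)))"
proof -
  have "(\<forall>j\<in>{1..10}. intertwines \<phi> b c j) \<longleftrightarrow>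
      (\<forall>k<5. intertwines \<phi> b c (2*k+1) \<and> intertwines \<phi> b c (2*k+2))" for \<phi>
    using ball_atLeastAtMost_double[of 5 "intertwines \<phi> b c"] by simp
  then show ?thesis
    unfolding M_iso_def intertwines_def[symmetric] by (simp only:)
qed

lemma intertwines_odd_iff:
  assumes "k < 5"
  shows "intertwines \<phi> b c (2*k+1) \<longleftrightarrow>
    \<phi> (2*k+1) ** mat2 fps_X (b (2*k+1)) 0 1 = mat2 fps_X (c (2*k+1)) 0 1 ** \<phi> (2*k) \<and>
    \<phi> (2*k) ** mat2 1 (- b (2*k+1)) 0 fps_X = mat2 1 (- c (2*k+1)) 0 fps_X ** \<phi> (2*k+1)"
  using assms by (simp add: intertwines_def xmat_def ymat_def)

lemma intertwines_even_iff:
  assumes "k < 5"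
  shows "intertwines \<phi> b c (2*k+2) \<longleftrightarrow>
    \<phi> (2 * ((k + 1) mod 5)) ** mat2 1 (b (2*k+2)) 0 fps_X =
      mat2 1 (c (2*k+2)) 0 fps_X ** \<phi> (2*k+1) \<and>
    \<phi> (2*k+1) ** mat2 fps_X (- b (2*k+2)) 0 1 =
      mat2 fps_X (- c (2*k+2)) 0 1 ** \<phi> (2 * ((k + 1) mod 5))"
proof -
  have "(2*k+2) mod 10 = 2 * ((k + 1) mod 5)" using assms by (cases "k = 4") auto
  then show ?thesis by (simp add: intertwines_def xmat_def ymat_def)
qed

definition block_sums :: "(nat \<Rightarrow> complex fps) \<Rightarrow> (nat \<Rightarrow> complex) \<Rightarrow> bool" where
  "block_sums b B \<longleftrightarrow> (\<forall>k<5. b (2*k+1) + b (2*k+2) = fps_const (B k))"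

definition iso_data ::
    "(nat \<Rightarrow> complex) \<Rightarrow> (nat \<Rightarrow> complex) \<Rightarrow> (nat \<Rightarrow> complex) \<Rightarrow> (nat \<Rightarrow> complex) \<Rightarrow> complex \<Rightarrow> bool"
  where
  "iso_data B C a d e \<longleftrightarrow> (\<forall>k<5. a k * d k \<noteq> 0 \<and>
     a ((k + 1) mod 5) = a k + C k * e \<and> d ((k + 1) mod 5) = d k - B k * e \<and>
     C k * d k - B k * a k = e * B k * C k)"

lemma M_iso_if_iso_data:
  assumes b: "block_sums b B" and c: "block_sums c C" and data: "iso_data B C a d e"
  shows "M_iso b c"
proof -
  define \<phi> where "\<phi> i = (if even i then even_map (a (i div 2)) (d (i div 2)) e
      else odd_map (a (i div 2)) (d (i div 2)) e (b i) (c i))" for i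
  have "invertible (\<phi> i)" if "i < 10" for i
  proof -
    have "a (i div 2) * d (i div 2) \<noteq> 0" using data that by (simp add: iso_data_def)
    then show ?thesis by (simp add: \<phi>_def invertible_even_map invertible_odd_map)
  qed
  moreover have "intertwines \<phi> b c (2*k+1) \<and> intertwines \<phi> b c (2*k+2)" if k: "k < 5" for k
  proof -
    from data k have succ: "a ((k + 1) mod 5) = a k + C k * e" "d ((k + 1) mod 5) = d k - B k * e"
      and cond: "C k * d k - B k * a k = e * B k * C k"
      by (simp_all add: iso_data_def)
    have "\<phi> (2*((k + 1) mod 5)) = even_map (a k + C k * e) (d k - B k * e) e"
      using succ by (simp add: \<phi>_def)
    moreover have "\<phi> (2*k) = even_map (a k) (d k) e"
      and "\<phi> (2*k+1) = odd_map (a k) (d k) e (b (2*k+1)) (c (2*k+1))"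
      by (simp_all add: \<phi>_def)
    moreover have "b (2*k+1) + b (2*k+2) = fps_const (B k)"
      and "c (2*k+1) + c (2*k+2) = fps_const (C k)"
      using b c k by (simp_all add: block_sums_def)
    note block_intertwined_by_maps[OF this cond]
    ultimately show ?thesis
      unfolding intertwines_odd_iff[OF k] intertwines_even_iff[OF k] by simp
  qed
  ultimately show ?thesis unfolding M_iso_iff_blocks by blast
qed

lemma iso_data_if_M_iso:
  assumes b: "block_sums b B" and c: "block_sums c C" and "M_iso b c"
  obtains a d e where "iso_data B C a d e"
proof -
  obtain \<phi> where inv: "\<forall>i<10. invertible (\<phi> i)"
    and blocks: "\<forall>k<5. intertwines \<phi> b c (2*k+1) \<and> intertwines \<phi> b c (2*k+2)"
    using \<open>M_iso b c\<close> unfolding M_iso_iff_blocks by blast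
  define a where "a k = fps_nth (\<phi> (2*k) $ 1 $ 1) 0" for k
  define d where "d k = fps_nth (\<phi> (2*k) $ 2 $ 2) 0" for k
  define e where "e k = fps_nth (\<phi> (2*k+1) $ 2 $ 1) 0" for k
  have block: "fps_nth (\<phi> (2*k) $ 2 $ 1) 0 = 0" "fps_nth (\<phi> (2*k) $ 2 $ 1) 1 = e k"
      "fps_nth (\<phi> (2*((k + 1) mod 5)) $ 2 $ 1) 1 = e k"
      "a ((k + 1) mod 5) = a k + C k * e k" "d ((k + 1) mod 5) = d k - B k * e k"
      "C k * d k - B k * a k = e k * B k * C k" if k: "k < 5" for k
  proof -
    have odd: "\<phi> (2*k+1) ** mat2 fps_X (b (2*k+1)) 0 1 = mat2 fps_X (c (2*k+1)) 0 1 ** \<phi> (2*k)"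
      and even: "\<phi> (2*((k + 1) mod 5)) ** mat2 1 (b (2*k+2)) 0 fps_X =
        mat2 1 (c (2*k+2)) 0 fps_X ** \<phi> (2*k+1)"
      using spec[OF blocks, of k] k
      unfolding intertwines_odd_iff[OF k] intertwines_even_iff[OF k] by blast+
    have "b (2*k+1) + b (2*k+2) = fps_const (B k)" "c (2*k+1) + c (2*k+2) = fps_const (C k)"
      using b c k by (simp_all add: block_sums_def)
    note constant_terms = block_constant_terms[OF odd even this]
    show "fps_nth (\<phi> (2*k) $ 2 $ 1) 0 = 0" "fps_nth (\<phi> (2*k) $ 2 $ 1) 1 = e k"
      "fps_nth (\<phi> (2*((k + 1) mod 5)) $ 2 $ 1) 1 = e k"
      "a ((k + 1) mod 5) = a k + C k * e k" "d ((k + 1) mod 5) = d k - B k * e k"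
      "C k * d k - B k * a k = e k * B k * C k"
      unfolding a_def d_def e_def by (fact constant_terms)+
  qed
  have e_const: "e k = e 0" if "k < 5" for k
    using that
  proof (induction k)
    case (Suc k)
    then have "k < 5" and wrap: "(k + 1) mod 5 = Suc k" by simp_all
    have "e (Suc k) = fps_nth (\<phi> (2 * Suc k) $ 2 $ 1) 1"
      using block(2)[OF Suc.prems] by simp
    also have "\<dots> = e k" using block(3)[OF \<open>k < 5\<close>] unfolding wrap .
    also have "\<dots> = e 0" using Suc.IH[OF \<open>k < 5\<close>] .
    finally show ?case .
  qed simp
  have "iso_data B C a d (e 0)"
    unfolding iso_data_def
  proof (intro allI impI conjI)
    fix k :: nat assume k: "k < 5"
    show "a k * d k \<noteq> 0"
      using invertible_imp_diagonal_nth_0_nonzero[OF _ block(1)[OF k]] inv k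
      by (simp add: a_def d_def)
    show "a ((k + 1) mod 5) = a k + C k * e 0" "d ((k + 1) mod 5) = d k - B k * e 0"
      "C k * d k - B k * a k = e 0 * B k * C k"
      using block(4-6)[OF k] unfolding e_const[OF k] by simp_all
  qed
  then show thesis by (rule that)
qed

lemma M_iso_iff_iso_data:
  assumes "block_sums b B" and "block_sums c C"
  shows "M_iso b c \<longleftrightarrow> (\<exists>a d e. iso_data B C a d e)"
  using assms iso_data_if_M_iso M_iso_if_iso_data by metis

lemma all_less_5_iff: "(\<forall>k<5::nat. P k) \<longleftrightarrow> P 0 \<and> P 1 \<and> P 2 \<and> P 3 \<and> P 4"
  by (auto simp: less_Suc_eq numeral_eq_Suc)

definition beta_blocks :: "complex \<Rightarrow> nat \<Rightarrow> complex" where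
  "beta_blocks \<beta> k = [\<beta>, 1, -1, - \<beta> - 1, 1] ! k"

lemma block_sums_beta_blocks: "M_beta_tuple b \<beta> \<Longrightarrow> block_sums b (beta_blocks \<beta>)"
  unfolding block_sums_def all_less_5_iff beta_blocks_def M_beta_tuple_def
  by (simp add: numeral_eq_Suc fps_const_neg)

lemma iso_data_beta_blocks_imp:
  assumes "iso_data (beta_blocks \<beta>) (beta_blocks \<gamma>) a d e"
  shows "\<beta> = \<gamma> \<or> \<beta> + \<gamma> = -2"
proof -
  have blk: "a k * d k \<noteq> 0" "a ((k + 1) mod 5) = a k + beta_blocks \<gamma> k * e"
      "d ((k + 1) mod 5) = d k - beta_blocks \<beta> k * e"
      "beta_blocks \<gamma> k * d k - beta_blocks \<beta> k * a k = e * beta_blocks \<beta> k * beta_blocks \<gamma> k"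
    if "k < 5" for k
    using assms[unfolded iso_data_def, rule_format, OF that] by simp_all
  have nz: "a 0 * d 0 \<noteq> 0" and cond0: "\<gamma> * d 0 - \<beta> * a 0 = e * \<beta> * \<gamma>"
    and rec0: "a 1 = a 0 + \<gamma> * e" "d 1 = d 0 - \<beta> * e"
    using blk[of 0] by (simp_all add: beta_blocks_def)
  have cond1: "d 1 - a 1 = e" and rec1: "a 2 = a 1 + e" "d 2 = d 1 - e"
    using blk[of 1] by (simp_all add: beta_blocks_def numeral_2_eq_2)
  have rec2: "a 3 = a 2 - e" "d 3 = d 2 + e"
    using blk[of 2] by (simp_all add: beta_blocks_def)
  have rec3: "a 4 = a 3 + (- \<gamma> - 1) * e" "d 4 = d 3 - (- \<beta> - 1) * e"
    using blk[of 3] by (simp_all add: beta_blocks_def)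
  have cond4: "d 4 - a 4 = e"
    using blk[of 4] by (simp add: beta_blocks_def)
  have "d 4 - a 4 = d 1 - a 1 + (\<beta> + \<gamma> + 2) * e"
    using rec1 rec2 rec3 by (simp add: algebra_simps)
  then have "(\<beta> + \<gamma> + 2) * e = 0" using cond1 cond4 by simp
  then consider "e = 0" | "\<beta> + \<gamma> + 2 = 0" by auto
  then show ?thesis
  proof cases
    case 1
    then have "a 0 = d 0" using rec0 cond1 by simp
    then have "(\<gamma> - \<beta>) * a 0 = 0" using cond0 1 by (simp add: algebra_simps)
    then show ?thesis using nz by simp
  next
    case 2
    then show ?thesis by (simp add: algebra_simps eq_neg_iff_add_eq_0)
  qed
qed

lemma iso_data_beta_blocks_exists:
  assumes "\<beta> \<noteq> 0" "\<beta> \<noteq> -2" and "\<beta> = \<gamma> \<or> \<beta> + \<gamma> = -2"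
  shows "\<exists>a d e. iso_data (beta_blocks \<beta>) (beta_blocks \<gamma>) a d e"
  using assms(3)
proof
  assume "\<beta> = \<gamma>"
  then have "iso_data (beta_blocks \<beta>) (beta_blocks \<gamma>) (\<lambda>_. 1) (\<lambda>_. 1) 0"
    by (simp add: iso_data_def)
  then show ?thesis by blast
next
  assume "\<beta> + \<gamma> = -2"
  then have \<gamma>: "\<gamma> = -2 - \<beta>" by (simp add: algebra_simps eq_diff_eq)
  have "\<beta> + 2 \<noteq> 0" "- \<beta> \<noteq> 2"
    using assms(2) by (auto simp: eq_neg_iff_add_eq_0 minus_equation_iff[of \<beta>])
  then have "iso_data (beta_blocks \<beta>) (beta_blocks \<gamma>)
      (\<lambda>k. [\<beta> + 2, - \<beta> - 2, - \<beta>, - \<beta> - 2, \<beta>] ! k)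
      (\<lambda>k. [\<beta>, - \<beta>, - \<beta> - 2, - \<beta>, \<beta> + 2] ! k) 2"
    using assms(1) by (simp add: iso_data_def all_less_5_iff beta_blocks_def \<gamma> algebra_simps)
  then show ?thesis by blast
qed

lemma power2_one_add_eq_iff:
  fixes \<beta> \<gamma> :: "'a::idom"
  shows "(1 + \<beta>)^2 = (1 + \<gamma>)^2 \<longleftrightarrow> \<beta> = \<gamma> \<or> \<beta> + \<gamma> = -2"
  unfolding power2_eq_iff by (auto simp: algebra_simps eq_neg_iff_add_eq_0)

theorem mainTheorem8:
  fixes \<beta> \<gamma> :: complex and b c :: "nat \<Rightarrow> complex fps"
  assumes "\<beta> \<notin> {0, -1, -2}" and "\<gamma> \<notin> {0, -1, -2}"
    and "M_beta_tuple b \<beta>" and "M_beta_tuple c \<gamma>"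
  shows "(M_iso b c \<longleftrightarrow> (1 + \<beta>)^2 = (1 + \<gamma>)^2) \<and>
         ((1 + \<beta>)^2 = (1 + \<gamma>)^2 \<longleftrightarrow> \<beta> = \<gamma> \<or> \<beta> + \<gamma> = -2)"
proof -
  have "M_iso b c \<longleftrightarrow> (\<exists>a d e. iso_data (beta_blocks \<beta>) (beta_blocks \<gamma>) a d e)"
    using assms(3,4) by (intro M_iso_iff_iso_data block_sums_beta_blocks)
  also have "\<dots> \<longleftrightarrow> \<beta> = \<gamma> \<or> \<beta> + \<gamma> = -2"
    using assms(1) iso_data_beta_blocks_imp iso_data_beta_blocks_exists by blast
  finally show ?thesis
    using power2_one_add_eq_iff by blast
qed

end
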